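(* Let $S$ be the $d$-dimensional quantum system ($d<\infty$, orthonormal basis $\{|k\rangle\}$) with all density matrices as states and all quantum channels as transformations, and let $\mathcal D(\cdot)=\sum_k|k\rangle\langle k|\cdot|k\rangle\langle k|$. Let the agent $A$ have a set of actions $\mathsf{Act}(A;S)$ such that (1) $\mathsf{Act}(A;S)$ contains every classical channel, i.e. every channel $\mathcal T$ with $\mathcal T=\mathcal D\circ\mathcal T\circ\mathcal D$, and (2) $\mathcal D\circ\mathcal T=\mathcal T\circ\mathcal D$ for every $\mathcal T\in\mathsf{Act}(A;S)$. Then (i) two states $\rho,\sigma$ are equivalent for $A$ iff $\mathcal D(\rho)=\mathcal D(\sigma)$; (ii) two transformations $\mathcal S,\mathcal T\in\mathsf{Act}(A;S)''$ are equivalent for $A$ iff $\mathcal D\circ\mathcal S\circ\mathcal D=\mathcal D\circ\mathcal T\circ\mathcal D$. Hence $S_A$ is the $d$-dimensional classical system (diagonal density matrices, classical stochastic maps).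
   Context: For an agent $A$, $\mathsf{Act}(A;S)'$ is the set of channels commuting with each element of $\mathsf{Act}(A;S)$, and $\mathsf{Act}(A;S)''=(\mathsf{Act}(A;S)')'$. $\mathrm{Deg}_{A'}(\rho)=\{\mathcal B(\rho):\mathcal B\in\mathsf{Act}(A;S)'\}$, $\mathrm{Deg}_{A'}(\mathcal T)=\{\mathcal B_1\circ\mathcal T\circ\mathcal B_2:\mathcal B_1,\mathcal B_2\in\mathsf{Act}(A;S)'\}$. States $\rho,\sigma$ (resp. transformations $\mathcal S,\mathcal T\in\mathsf{Act}(A;S)''$) are equivalent for $A$ if they are joined by a finite chain of states (resp. elements of $\mathsf{Act}(A;S)''$) in which consecutive elements have intersecting $\mathrm{Deg}_{A'}$ sets. The subsystem $S_A$ has as states and transformations the corresponding equivalence classes. *)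

theory Defs
  imports Complex_Main
begin

text \<open>A d-dimensional quantum system: the orthonormal basis is indexed by a finite
  type 'd (so d = CARD('d)); a d x d complex matrix is a function 'd => 'd => complex,
  the entry X i j being the matrix element of X between basis vectors i and j.\<close>

type_synonym 'd qmat = "'d \<Rightarrow> 'd \<Rightarrow> complex"
type_synonym 'd superop = "'d qmat \<Rightarrow> 'd qmat"

definition mtrace :: "('d::finite) qmat \<Rightarrow> complex" where
  "mtrace X = (\<Sum>i\<in>UNIV. X i i)"

definition psd :: "('d::finite) qmat \<Rightarrow> bool" where
  "psd X \<longleftrightarrow> (\<forall>v :: 'd \<Rightarrow> complex.
     Im (\<Sum>i\<in>UNIV. \<Sum>j\<in>UNIV. cnj (v i) * X i j * v j) = 0 \<and>
     Re (\<Sum>i\<in>UNIV. \<Sum>j\<in>UNIV. cnj (v i) * X i j * v j) \<ge> 0)"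

definition density :: "('d::finite) qmat \<Rightarrow> bool" where
  "density \<rho> \<longleftrightarrow> psd \<rho> \<and> mtrace \<rho> = 1"

text \<open>A (dk) x (dk) matrix on C^k (x) C^d, written as a k x k array of d x d blocks
  X a b (a, b < k); positivity of such a block matrix.\<close>
definition block_psd :: "nat \<Rightarrow> (nat \<Rightarrow> nat \<Rightarrow> ('d::finite) qmat) \<Rightarrow> bool" where
  "block_psd k X \<longleftrightarrow> (\<forall>v :: nat \<Rightarrow> 'd \<Rightarrow> complex.
     Im (\<Sum>a<k. \<Sum>b<k. \<Sum>i\<in>UNIV. \<Sum>j\<in>UNIV. cnj (v a i) * X a b i j * v b j) = 0 \<and>
     Re (\<Sum>a<k. \<Sum>b<k. \<Sum>i\<in>UNIV. \<Sum>j\<in>UNIV. cnj (v a i) * X a b i j * v b j) \<ge> 0)"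

definition clinear_superop :: "('d::finite) superop \<Rightarrow> bool" where
  "clinear_superop T \<longleftrightarrow>
     (\<forall>X Y. T (\<lambda>i j. X i j + Y i j) = (\<lambda>i j. T X i j + T Y i j)) \<and>
     (\<forall>c X. T (\<lambda>i j. c * X i j) = (\<lambda>i j. c * T X i j))"

text \<open>Complete positivity: id_k (x) T is positive for every ancilla dimension k
  (id_k (x) T acts blockwise).\<close>
definition completely_positive :: "('d::finite) superop \<Rightarrow> bool" where
  "completely_positive T \<longleftrightarrow>
     (\<forall>k X. block_psd k X \<longrightarrow> block_psd k (\<lambda>a b. T (X a b)))"

definition trace_preserving :: "('d::finite) superop \<Rightarrow> bool" where
  "trace_preserving T \<longleftrightarrow> (\<forall>X. mtrace (T X) = mtrace X)"

definition channel :: "('d::finite) superop \<Rightarrow> bool" where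
  "channel T \<longleftrightarrow> clinear_superop T \<and> completely_positive T \<and> trace_preserving T"

definition dephase :: "('d::finite) superop" where
  "dephase X = (\<lambda>i j. if i = j then X i j else 0)"

definition classical_channel :: "('d::finite) superop \<Rightarrow> bool" where
  "classical_channel T \<longleftrightarrow> channel T \<and> T = dephase \<circ> T \<circ> dephase"

definition commutant :: "('d::finite) superop set \<Rightarrow> 'd superop set" where
  "commutant A = {B. channel B \<and> (\<forall>T\<in>A. B \<circ> T = T \<circ> B)}"

definition Deg_state :: "('d::finite) superop set \<Rightarrow> 'd qmat \<Rightarrow> 'd qmat set" where
  "Deg_state Act \<rho> = {B \<rho> | B. B \<in> commutant Act}"

definition Deg_trans :: "('d::finite) superop set \<Rightarrow> 'd superop \<Rightarrow> 'd superop set" where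
  "Deg_trans Act T = {B1 \<circ> T \<circ> B2 | B1 B2. B1 \<in> commutant Act \<and> B2 \<in> commutant Act}"

text \<open>Equivalence for the agent: finite chains (reflexive-transitive closure) of states
  (resp. elements of Act'') with consecutive Deg sets intersecting.\<close>
definition state_equiv :: "('d::finite) superop set \<Rightarrow> 'd qmat \<Rightarrow> 'd qmat \<Rightarrow> bool" where
  "state_equiv Act \<rho> \<sigma> \<longleftrightarrow>
     (\<lambda>x y. density x \<and> density y \<and> Deg_state Act x \<inter> Deg_state Act y \<noteq> {})\<^sup>*\<^sup>* \<rho> \<sigma>"

definition trans_equiv :: "('d::finite) superop set \<Rightarrow> 'd superop \<Rightarrow> 'd superop \<Rightarrow> bool" where
  "trans_equiv Act S T \<longleftrightarrow>
     (\<lambda>x y. x \<in> commutant (commutant Act) \<and> y \<in> commutant (commutant Act) \<and>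
            Deg_trans Act x \<inter> Deg_trans Act y \<noteq> {})\<^sup>*\<^sup>* S T"

end

theory Submission
  imports Defs
begin

text \<open>Every channel B commuting with all classical channels fixes the diagonal matrices:
  B commutes with the channel preparing |k\<rangle>\<langle>k| and preserves traces, so it fixes
  |k\<rangle>\<langle>k|, and by linearity every diagonal matrix. Since B also commutes with the
  dephasing D, which is itself in the commutant, we get D \<circ> B = B \<circ> D = D. Consequently
  all elements of Deg(\<rho>) have the same diagonal D(\<rho>) and D(\<rho>) \<in> Deg(\<rho>), so two Deg sets
  intersect exactly when the diagonals agree; likewise for transformations with
  D \<circ> T \<circ> D. So intersection of Deg sets is already an equivalence relation and the
  chains add nothing.\<close>

lemma rtranclp_iff_invariant:
  assumes invariant: "\<And>x y. R x y \<Longrightarrow> f x = f y"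
    and complete: "\<And>x y. P x \<Longrightarrow> P y \<Longrightarrow> f x = f y \<Longrightarrow> R x y"
    and "P a" "P b"
  shows "R\<^sup>*\<^sup>* a b \<longleftrightarrow> f a = f b"
proof
  assume "R\<^sup>*\<^sup>* a b"
  then show "f a = f b"
    by (induction rule: rtranclp_induct) (auto dest: invariant)
qed (use assms in blast)

lemma clinear_superop_sum:
  assumes lin: "clinear_superop (B :: ('d::finite) superop)" and "finite F"
  shows "B (\<lambda>i j. \<Sum>x\<in>F. c x * M x i j) = (\<lambda>i j. \<Sum>x\<in>F. c x * B (M x) i j)"
  using \<open>finite F\<close>
proof (induction F rule: finite_induct)
  case empty
  have "B (\<lambda>i j. 0 * M x i j) = (\<lambda>i j. 0 * B (M x) i j)" for x
    using lin unfolding clinear_superop_def by blast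
  then show ?case by simp
next
  case (insert x F)
  have add: "B (\<lambda>i j. X i j + Y i j) = (\<lambda>i j. B X i j + B Y i j)"
    and scale: "B (\<lambda>i j. a * X i j) = (\<lambda>i j. a * B X i j)" for X Y a
    using lin unfolding clinear_superop_def by blast+
  have "B (\<lambda>i j. \<Sum>y\<in>insert x F. c y * M y i j)
      = B (\<lambda>i j. (\<lambda>i j. c x * M x i j) i j + (\<lambda>i j. \<Sum>y\<in>F. c y * M y i j) i j)"
    using insert by simp
  also have "\<dots> = (\<lambda>i j. \<Sum>y\<in>insert x F. c y * B (M y) i j)"
    unfolding add using insert scale[of "c x" "M x"] by simp
  finally show ?case .
qed

lemma block_psd_diag_entry:
  fixes X :: "nat \<Rightarrow> nat \<Rightarrow> ('d::finite) qmat"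
  assumes "block_psd k X"
  shows "Im (\<Sum>a<k. \<Sum>b<k. cnj (w a) * X a b l l * w b) = 0 \<and>
         Re (\<Sum>a<k. \<Sum>b<k. cnj (w a) * X a b l l * w b) \<ge> 0"
proof -
  define v where "v = (\<lambda>a (j::'d). if j = l then w a else 0)"
  have "(\<Sum>i\<in>UNIV. \<Sum>j\<in>UNIV. cnj (v a i) * X a b i j * v b j) = cnj (w a) * X a b l l * w b"
    for a b
  proof -
    have "cnj (v a i) * X a b i j * v b j
        = (if j = l then if i = l then cnj (w a) * X a b l l * w b else 0 else 0)" for i j
      by (simp add: v_def)
    then show ?thesis by simp
  qed
  with assms show ?thesis
    unfolding block_psd_def by (metis (no_types, lifting) sum.cong)
qed

definition stochastic_superop :: "('d::finite \<Rightarrow> 'd \<Rightarrow> real) \<Rightarrow> 'd superop" where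
  "stochastic_superop P X = (\<lambda>i j. if i = j then \<Sum>l\<in>UNIV. of_real (P i l) * X l l else 0)"

lemma clinear_stochastic_superop: "clinear_superop (stochastic_superop P)"
  unfolding clinear_superop_def stochastic_superop_def
  by (auto simp: fun_eq_iff sum.distrib sum_distrib_left algebra_simps)

lemma trace_preserving_stochastic_superop:
  assumes "\<And>l. (\<Sum>k\<in>UNIV. P k l) = 1"
  shows "trace_preserving (stochastic_superop P)"
  unfolding trace_preserving_def
proof
  fix X :: "'a qmat"
  have "mtrace (stochastic_superop P X) = (\<Sum>i\<in>UNIV. \<Sum>l\<in>UNIV. of_real (P i l) * X l l)"
    by (simp add: mtrace_def stochastic_superop_def)
  also have "\<dots> = (\<Sum>l\<in>UNIV. \<Sum>i\<in>UNIV. of_real (P i l) * X l l)"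
    by (rule sum.swap)
  also have "\<dots> = mtrace X"
    by (simp add: mtrace_def assms flip: sum_distrib_right of_real_sum)
  finally show "mtrace (stochastic_superop P X) = mtrace X" .
qed

text \<open>The quadratic form of the block matrix (id \<otimes> stochastic_superop P) X is a nonnegative
  combination of the quadratic forms of the diagonal compressions (X a b l l) of X.\<close>
lemma completely_positive_stochastic_superop:
  assumes nonneg: "\<And>k l. P k l \<ge> 0"
  shows "completely_positive (stochastic_superop P)"
  unfolding completely_positive_def
proof (intro allI impI)
  fix n and X :: "nat \<Rightarrow> nat \<Rightarrow> 'a qmat"
  assume psd: "block_psd n X"
  show "block_psd n (\<lambda>a b. stochastic_superop P (X a b))"
    unfolding block_psd_def
  proof (intro allI conjI)
    fix v :: "nat \<Rightarrow> 'a \<Rightarrow> complex"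
    define Q where "Q i l = (\<Sum>a<n. \<Sum>b<n. cnj (v a i) * X a b l l * v b i)" for i l
    have Q: "Im (Q i l) = 0" "Re (Q i l) \<ge> 0" for i l
      using block_psd_diag_entry[OF psd, of "\<lambda>a. v a i" l] by (simp_all add: Q_def)
    have inner: "(\<Sum>j\<in>UNIV. cnj (v a i) * stochastic_superop P M i j * v b j)
        = (\<Sum>l\<in>UNIV. of_real (P i l) * (cnj (v a i) * M l l * v b i))" for a b i M
    proof -
      have "(\<Sum>j\<in>UNIV. cnj (v a i) * stochastic_superop P M i j * v b j)
          = (\<Sum>j\<in>UNIV. if j = i then cnj (v a i) * (\<Sum>l\<in>UNIV. of_real (P i l) * M l l) * v b i else 0)"
        by (rule sum.cong) (auto simp: stochastic_superop_def)
      then show ?thesis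
        by (simp add: sum_distrib_left sum_distrib_right mult.assoc mult.left_commute)
    qed
    have "(\<Sum>a<n. \<Sum>b<n. \<Sum>i\<in>UNIV. \<Sum>j\<in>UNIV. cnj (v a i) * stochastic_superop P (X a b) i j * v b j)
        = (\<Sum>i\<in>UNIV. \<Sum>l\<in>UNIV. of_real (P i l) * Q i l)"
      unfolding inner Q_def
      by (simp add: sum_distrib_left sum.swap[of _ "{..<n}" "UNIV :: 'a set"])
    moreover have "Im (\<Sum>i\<in>UNIV. \<Sum>l\<in>UNIV. of_real (P i l) * Q i l) = 0"
      by (simp add: Im_sum Q)
    moreover have "Re (\<Sum>i\<in>UNIV. \<Sum>l\<in>UNIV. of_real (P i l) * Q i l) \<ge> 0"
      by (simp add: Re_sum Q nonneg sum_nonneg)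
    ultimately show
      "Im (\<Sum>a<n. \<Sum>b<n. \<Sum>i\<in>UNIV. \<Sum>j\<in>UNIV. cnj (v a i) * stochastic_superop P (X a b) i j * v b j) = 0"
      "Re (\<Sum>a<n. \<Sum>b<n. \<Sum>i\<in>UNIV. \<Sum>j\<in>UNIV. cnj (v a i) * stochastic_superop P (X a b) i j * v b j) \<ge> 0"
      by simp_all
  qed
qed

lemma classical_channel_stochastic_superop:
  assumes "\<And>k l. P k l \<ge> 0" and "\<And>l. (\<Sum>k\<in>UNIV. P k l) = 1"
  shows "classical_channel (stochastic_superop P)"
proof -
  have "channel (stochastic_superop P)"
    unfolding channel_def using clinear_stochastic_superop
      completely_positive_stochastic_superop[of P, OF assms(1)]
      trace_preserving_stochastic_superop[of P, OF assms(2)] by blast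
  then show ?thesis
    by (auto simp: classical_channel_def fun_eq_iff dephase_def stochastic_superop_def)
qed

lemma dephase_eq_stochastic_superop:
  "dephase = stochastic_superop (\<lambda>k l. if k = l then 1 else 0)"
proof -
  have "complex_of_real (if k = l then 1 else 0) * c = (if l = k then c else 0)" for k l :: 'a and c
    by simp
  then show ?thesis
    by (simp add: fun_eq_iff dephase_def stochastic_superop_def)
qed

lemma classical_channel_dephase: "classical_channel dephase"
  unfolding dephase_eq_stochastic_superop
  by (rule classical_channel_stochastic_superop) auto

definition basis_proj :: "'d \<Rightarrow> ('d::finite) qmat" where
  "basis_proj k = (\<lambda>i j. if i = k \<and> j = k then 1 else 0)"

lemma mtrace_basis_proj: "mtrace (basis_proj k) = 1"
  by (simp add: mtrace_def basis_proj_def)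

lemma dephase_eq_sum_basis_proj: "dephase X = (\<lambda>i j. \<Sum>k\<in>UNIV. X k k * basis_proj k i j)"
  by (auto simp: fun_eq_iff dephase_def basis_proj_def if_distrib cong: if_cong intro!: sum.neutral)

definition reset_channel :: "'d \<Rightarrow> ('d::finite) superop" where
  "reset_channel k = stochastic_superop (\<lambda>i l. if i = k then 1 else 0)"

lemma reset_channel_apply: "reset_channel k X = (\<lambda>i j. mtrace X * basis_proj k i j)"
  by (auto simp: fun_eq_iff reset_channel_def stochastic_superop_def basis_proj_def mtrace_def)

lemma classical_channel_reset_channel: "classical_channel (reset_channel k)"
  unfolding reset_channel_def
  by (rule classical_channel_stochastic_superop) auto

lemma commutant_fixes_basis_proj:
  assumes classical_in: "\<And>T. classical_channel T \<Longrightarrow> T \<in> Act"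
    and B: "B \<in> commutant Act"
  shows "B (basis_proj k) = basis_proj k"
proof -
  have "B \<circ> reset_channel k = reset_channel k \<circ> B"
    using B classical_in[OF classical_channel_reset_channel] unfolding commutant_def by blast
  then have "B (reset_channel k (basis_proj k)) = reset_channel k (B (basis_proj k))"
    by (metis comp_apply)
  moreover have "mtrace (B (basis_proj k)) = mtrace (basis_proj k)"
    using B unfolding commutant_def channel_def trace_preserving_def by blast
  ultimately show ?thesis
    by (simp add: reset_channel_apply mtrace_basis_proj)
qed

lemma commutant_comp_dephase:
  assumes classical_in: "\<And>T. classical_channel T \<Longrightarrow> T \<in> Act"
    and B: "B \<in> commutant Act"
  shows "B \<circ> dephase = dephase"
proof
  fix X
  have "clinear_superop B"
    using B unfolding commutant_def channel_def by blast
  then have "B (dephase X) = (\<lambda>i j. \<Sum>k\<in>UNIV. X k k * B (basis_proj k) i j)"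
    unfolding dephase_eq_sum_basis_proj by (rule clinear_superop_sum) simp
  then show "(B \<circ> dephase) X = dephase X"
    by (simp add: commutant_fixes_basis_proj[OF assms] dephase_eq_sum_basis_proj)
qed

lemma dephase_comp_commutant:
  assumes classical_in: "\<And>T. classical_channel T \<Longrightarrow> T \<in> Act"
    and B: "B \<in> commutant Act"
  shows "dephase \<circ> B = dephase"
proof -
  have "B \<circ> dephase = dephase \<circ> B"
    using B classical_in[OF classical_channel_dephase] unfolding commutant_def by blast
  with commutant_comp_dephase[OF assms] show ?thesis by simp
qed

lemma dephase_in_commutant:
  assumes "\<forall>T\<in>Act. dephase \<circ> T = T \<circ> dephase"
  shows "dephase \<in> commutant Act"
  using assms classical_channel_dephase unfolding commutant_def classical_channel_def by blast

context
  fixes Act :: "('d::finite) superop set"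
  assumes classical_in: "\<forall>T. classical_channel T \<longrightarrow> T \<in> Act"
    and commute_dephase: "\<forall>T\<in>Act. dephase \<circ> T = T \<circ> dephase"
begin

lemma commutant_absorbs_dephase:
  assumes "B \<in> commutant Act"
  shows "dephase \<circ> B = dephase" "B \<circ> dephase = dephase"
  using dephase_comp_commutant commutant_comp_dephase classical_in assms by auto

lemma Deg_state_inter_iff: "Deg_state Act x \<inter> Deg_state Act y \<noteq> {} \<longleftrightarrow> dephase x = dephase y"
proof
  assume "Deg_state Act x \<inter> Deg_state Act y \<noteq> {}"
  then obtain B1 B2 where B: "B1 \<in> commutant Act" "B2 \<in> commutant Act" "B1 x = B2 y"
    unfolding Deg_state_def by blast
  have "dephase x = dephase (B1 x)"
    using commutant_absorbs_dephase(1)[OF B(1)] by (metis comp_apply)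
  also have "\<dots> = dephase y"
    using commutant_absorbs_dephase(1)[OF B(2)] B(3) by (metis comp_apply)
  finally show "dephase x = dephase y" .
next
  assume "dephase x = dephase y"
  then show "Deg_state Act x \<inter> Deg_state Act y \<noteq> {}"
    using dephase_in_commutant[OF commute_dephase] unfolding Deg_state_def by blast
qed

lemma Deg_trans_inter_iff:
  "Deg_trans Act S \<inter> Deg_trans Act T \<noteq> {} \<longleftrightarrow> dephase \<circ> S \<circ> dephase = dephase \<circ> T \<circ> dephase"
proof
  assume "Deg_trans Act S \<inter> Deg_trans Act T \<noteq> {}"
  then obtain B1 B2 B3 B4 where B: "B1 \<in> commutant Act" "B2 \<in> commutant Act"
    "B3 \<in> commutant Act" "B4 \<in> commutant Act" "B1 \<circ> S \<circ> B2 = B3 \<circ> T \<circ> B4"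
    unfolding Deg_trans_def by blast
  note absorb = commutant_absorbs_dephase[OF B(1)] commutant_absorbs_dephase[OF B(2)]
    commutant_absorbs_dephase[OF B(3)] commutant_absorbs_dephase[OF B(4)]
  have "dephase \<circ> S \<circ> dephase = (dephase \<circ> B1) \<circ> S \<circ> (B2 \<circ> dephase)"
    by (simp add: absorb)
  also have "\<dots> = dephase \<circ> (B1 \<circ> S \<circ> B2) \<circ> dephase"
    by (simp add: comp_assoc)
  also have "\<dots> = dephase \<circ> (B3 \<circ> T \<circ> B4) \<circ> dephase"
    by (simp only: B(5))
  also have "\<dots> = (dephase \<circ> B3) \<circ> T \<circ> (B4 \<circ> dephase)"
    by (simp add: comp_assoc)
  also have "\<dots> = dephase \<circ> T \<circ> dephase"
    by (simp add: absorb)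
  finally show "dephase \<circ> S \<circ> dephase = dephase \<circ> T \<circ> dephase" .
next
  assume "dephase \<circ> S \<circ> dephase = dephase \<circ> T \<circ> dephase"
  then show "Deg_trans Act S \<inter> Deg_trans Act T \<noteq> {}"
    using dephase_in_commutant[OF commute_dephase] unfolding Deg_trans_def by blast
qed

end

theorem mainTheorem10:
  fixes Act :: "('d::finite) superop set"
  assumes act_channels: "\<forall>T\<in>Act. channel T"
    and classical_in: "\<forall>T. classical_channel T \<longrightarrow> T \<in> Act"
    and commute_D: "\<forall>T\<in>Act. dephase \<circ> T = T \<circ> dephase"
  shows "(\<forall>\<rho> \<sigma>. density \<rho> \<longrightarrow> density \<sigma> \<longrightarrow>
            (state_equiv Act \<rho> \<sigma> \<longleftrightarrow> dephase \<rho> = dephase \<sigma>)) \<and>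
         (\<forall>S T. S \<in> commutant (commutant Act) \<longrightarrow> T \<in> commutant (commutant Act) \<longrightarrow>
            (trans_equiv Act S T \<longleftrightarrow> dephase \<circ> S \<circ> dephase = dephase \<circ> T \<circ> dephase))"
proof -
  note Deg_inter_iff = Deg_state_inter_iff[OF classical_in commute_D]
    Deg_trans_inter_iff[OF classical_in commute_D]
  have "state_equiv Act \<rho> \<sigma> \<longleftrightarrow> dephase \<rho> = dephase \<sigma>"
    if "density \<rho>" "density \<sigma>" for \<rho> \<sigma>
    unfolding state_equiv_def Deg_inter_iff
    by (rule rtranclp_iff_invariant[where P = density and f = dephase]) (auto simp: that)
  moreover have "trans_equiv Act S T \<longleftrightarrow> dephase \<circ> S \<circ> dephase = dephase \<circ> T \<circ> dephase"
    if "S \<in> commutant (commutant Act)" "T \<in> commutant (commutant Act)" for S T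
    unfolding trans_equiv_def Deg_inter_iff
    by (rule rtranclp_iff_invariant[where P = "\<lambda>x. x \<in> commutant (commutant Act)"
          and f = "\<lambda>x. dephase \<circ> x \<circ> dephase"]) (auto simp: that)
  ultimately show ?thesis by blast
qed

end
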